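(* There is a constant $C<\infty$, independent of $m\in(0,1)$ and of $K$, such that for all positive integers $K$ and all $m\in(0,1)$, $$\mathbb{E}\big[|\hat\lambda_K(m)-\lambda(m)|^\gamma\big]\le CK^{-\gamma d/2}.$$
   Context: $\alpha=(\alpha_x)_{x\in\mathbb{Z}^d}$ is a stationary random field (expectation $\mathbb{E}$) with $|\alpha_x|\le B<\infty$, satisfying the mixing condition: there exist $\gamma\ge\max\{4,2(d+2)/d^2\}$ and $C<\infty$ such that for all positive integers $l,K$ and every function $f$ of $(\alpha_x)_{x\in\Lambda_l}$ with $\mathbb{E}[f]=0$, $\mathbb{E}[|K^{-d}\sum_{x\in\Lambda_K}\tau_xf|^\gamma]\le C(l/K)^{\gamma d/2}\mathbb{E}[|f|^\gamma]$, where $\Lambda_n$ is a box of side length $n$ and $(\tau_x\alpha)_y=\alpha_{x+y}$, $\tau_xf(\alpha)=f(\tau_x\alpha)$; $\gamma$ in the claim is this exponent. The annealed chemical potential $\lambda(m)$ is defined by $\mathbb{E}[e^{\alpha_0+\lambda}/(1+e^{\alpha_0+\lambda})]=m$, and the empirical chemical potential $\hat\lambda_K(m)$ on $\Lambda_K$ is defined by $m=K^{-d}\sum_{x\in\Lambda_K}e^{\hat\lambda_K+\alpha_x}/(1+e^{\hat\lambda_K+\alpha_x})$. *)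

theory Defs
  imports "HOL-Probability.Probability"
begin

text \<open>Lattice points of Z^d are vectors int ^ 'd, with d = CARD('d).\<close>

definition box :: "nat \<Rightarrow> (int ^ 'd) set" where
  "box n = {x. \<forall>i. 0 \<le> x $ i \<and> x $ i < int n}"

definition logistic :: "real \<Rightarrow> real" where
  "logistic t = exp t / (1 + exp t)"

definition shift :: "int ^ 'd \<Rightarrow> (int ^ 'd \<Rightarrow> real) \<Rightarrow> (int ^ 'd \<Rightarrow> real)" where
  "shift x a = (\<lambda>y. a (x + y))"

definition annealed_cp :: "'w measure \<Rightarrow> ('w \<Rightarrow> int ^ 'd \<Rightarrow> real) \<Rightarrow> real \<Rightarrow> real" where
  "annealed_cp M \<alpha> m = (THE l. (\<integral>\<omega>. logistic (\<alpha> \<omega> 0 + l) \<partial>M) = m)"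

definition empirical_cp :: "('w \<Rightarrow> int ^ 'd \<Rightarrow> real) \<Rightarrow> nat \<Rightarrow> real \<Rightarrow> 'w \<Rightarrow> real" where
  "empirical_cp \<alpha> K m \<omega> =
     (THE l. m = (1 / real K ^ CARD('d)) * (\<Sum>x\<in>(box K :: (int ^ 'd) set). logistic (l + \<alpha> \<omega> x)))"

end

theory Submission
  imports Defs
begin

(* Both chemical potentials solve an equation "mean of logistic (l + potential) = m": the annealed
   one for the law of alpha_0, the empirical one for the uniform distribution on the box. As
   |alpha| <= B, both solutions lie within B of logit m, where the slope of the logistic function
   agrees up to a factor exp (2B) with D = logistic'(logit m). Inverting the empirical equation gives
   |lambda_hat - lambda| <= exp (2B) / D * |box average of f| for the centred local observable
   f = logistic (lambda + alpha_0) - m, which is bounded by 2B exp (2B) D. The mixing hypothesis with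
   l = 1 bounds the gamma-th moment of this average by C0 K^(-gamma d/2) (2B exp (2B) D)^gamma, and
   the factor D cancels, so the constant does not depend on m. *)

definition dlogistic :: "real \<Rightarrow> real" where
  "dlogistic s = exp s / (1 + exp s)\<^sup>2"

lemma one_plus_exp_pos [simp]: "0 < 1 + exp (s::real)" "1 + exp s \<noteq> 0"
  using exp_gt_zero[of s] by linarith+

lemma logistic_bounds: "0 < logistic s" "logistic s < 1"
  unfolding logistic_def by simp_all

lemma strict_mono_logistic: "strict_mono logistic"
proof (rule strict_monoI)
  fix a b :: real
  assume "a < b"
  then have "exp a < exp b" by simp
  then show "logistic a < logistic b"
    unfolding logistic_def by (simp add: field_simps)
qed

definition logit :: "real \<Rightarrow> real" where
  "logit m = ln (m / (1 - m))"

lemma logistic_logit: "0 < m \<Longrightarrow> m < 1 \<Longrightarrow> logistic (logit m) = m"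
  unfolding logistic_def logit_def by (simp add: field_simps)

lemma logistic_mono: "a \<le> b \<Longrightarrow> logistic a \<le> logistic b"
  using strict_mono_logistic by (simp add: strict_mono_less_eq)

lemma continuous_on_logistic: "continuous_on S logistic"
  unfolding logistic_def by (intro continuous_intros) simp

lemma borel_measurable_logistic [measurable]: "logistic \<in> borel_measurable borel"
  by (rule borel_measurable_continuous_onI) (rule continuous_on_logistic)

lemma has_real_derivative_logistic: "(logistic has_real_derivative dlogistic s) (at s)"
  unfolding logistic_def dlogistic_def
  by (rule derivative_eq_intros refl | simp)+
     (simp add: power2_eq_square field_simps)

lemma dlogistic_pos: "0 < dlogistic s"
  unfolding dlogistic_def by simp

lemma dlogistic_le_one: "dlogistic s \<le> 1"
proof -
  have "exp s \<le> (1 + exp s)\<^sup>2"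
    by (simp add: power2_eq_square algebra_simps add_increasing)
  then show ?thesis
    unfolding dlogistic_def by simp
qed

lemma dlogistic_ratio: "exp (- \<bar>s - t\<bar>) * dlogistic t \<le> dlogistic s"
proof (cases "t \<le> s")
  case True
  have "exp t * (1 + exp s) \<le> exp s * (1 + exp t)"
    using True by (simp add: algebra_simps)
  then have "(exp t * (1 + exp s))\<^sup>2 \<le> (exp s * (1 + exp t))\<^sup>2"
    by (intro power_mono) auto
  then have "exp t * exp t / (exp s * (1 + exp t)\<^sup>2) \<le> exp s / (1 + exp s)\<^sup>2"
    by (simp add: divide_simps power2_eq_square[of "exp _"] mult_ac)
  then show ?thesis
    using True unfolding dlogistic_def by (simp add: exp_diff exp_minus field_simps)
next
  case False
  then have "(1 + exp s)\<^sup>2 \<le> (1 + exp t)\<^sup>2"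
    by (intro power_mono) (auto simp: add_pos_pos less_imp_le)
  then have "exp s / (1 + exp t)\<^sup>2 \<le> exp s / (1 + exp s)\<^sup>2"
    by (intro divide_left_mono) auto
  then show ?thesis
    using False unfolding dlogistic_def by (simp add: exp_diff exp_minus field_simps)
qed

lemma dlogistic_near:
  assumes "\<bar>z - L\<bar> \<le> R"
  shows "exp (- R) * dlogistic L \<le> dlogistic z" "dlogistic z \<le> exp R * dlogistic L"
proof -
  have "exp (- R) * dlogistic L \<le> exp (- \<bar>z - L\<bar>) * dlogistic L"
    using assms dlogistic_pos[of L] by (intro mult_right_mono) auto
  also have "\<dots> \<le> dlogistic z" by (rule dlogistic_ratio)
  finally show "exp (- R) * dlogistic L \<le> dlogistic z" .
  have "exp (- \<bar>L - z\<bar>) * dlogistic z \<le> dlogistic L" by (rule dlogistic_ratio)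
  then have "dlogistic z \<le> exp \<bar>L - z\<bar> * dlogistic L"
    by (simp add: exp_minus field_simps)
  also have "\<dots> \<le> exp R * dlogistic L"
    using assms dlogistic_pos[of L] by (intro mult_right_mono) auto
  finally show "dlogistic z \<le> exp R * dlogistic L" .
qed

lemma logistic_diff_bounds:
  assumes "a \<le> b" "\<bar>a - L\<bar> \<le> R" "\<bar>b - L\<bar> \<le> R"
  shows "(b - a) * (exp (- R) * dlogistic L) \<le> logistic b - logistic a"
    and "logistic b - logistic a \<le> (b - a) * (exp R * dlogistic L)"
proof -
  obtain z where z: "a \<le> z" "z \<le> b" "logistic b - logistic a = (b - a) * dlogistic z"
  proof (cases "a = b")
    case False
    with assms(1) have "a < b" by simp
    then obtain z where "a < z" "z < b" "logistic b - logistic a = (b - a) * dlogistic z"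
      using MVT2[of a b logistic dlogistic] has_real_derivative_logistic by blast
    then show thesis by (intro that[of z]) auto
  qed (use that in auto)
  have "\<bar>z - L\<bar> \<le> R" using z assms by auto
  note near = dlogistic_near[OF this]
  show "(b - a) * (exp (- R) * dlogistic L) \<le> logistic b - logistic a"
    unfolding z(3) using near(1) assms(1) by (intro mult_left_mono) auto
  show "logistic b - logistic a \<le> (b - a) * (exp R * dlogistic L)"
    unfolding z(3) using near(2) assms(1) by (intro mult_left_mono) auto
qed

lemma logistic_lipschitz: "\<bar>logistic a - logistic b\<bar> \<le> \<bar>a - b\<bar>"
proof -
  have "logistic y - logistic x \<le> y - x" if "x \<le> y" for x y
  proof (cases "x = y")
    case False
    with that have "x < y" by simp
    then obtain z where "logistic y - logistic x = (y - x) * dlogistic z"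
      using MVT2[of x y logistic dlogistic] has_real_derivative_logistic by blast
    then show ?thesis
      using mult_left_le[OF dlogistic_le_one[of z], of "y - x"] that by simp
  qed simp
  from this[of a b] this[of b a] show ?thesis
    using logistic_mono[of a b] logistic_mono[of b a] by (cases "a \<le> b") (simp_all add: abs_if)
qed

lemma strict_mono_the_solution:
  fixes G :: "real \<Rightarrow> real"
  assumes mono: "strict_mono G" and cont: "continuous_on {a..b} G"
    and "a \<le> b" "G a \<le> m" "m \<le> G b"
  shows "G (THE l. G l = m) = m" "(THE l. G l = m) \<in> {a..b}"
proof -
  obtain x where x: "x \<in> {a..b}" "G x = m"
    using IVT'[of G a m b] assms by auto
  moreover have "(THE l. G l = m) = x"
    using x(2) strict_mono_eq[OF mono] by (intro the_equality) auto
  ultimately show "G (THE l. G l = m) = m" "(THE l. G l = m) \<in> {a..b}"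
    by simp_all
qed

lemma abs_diff_le_of_growth:
  fixes G :: "real \<Rightarrow> real"
  assumes growth: "\<And>x y. x \<in> I \<Longrightarrow> y \<in> I \<Longrightarrow> x \<le> y \<Longrightarrow> c * (y - x) \<le> G y - G x"
    and "0 < c" "h \<in> I" "l \<in> I"
  shows "\<bar>h - l\<bar> \<le> \<bar>G h - G l\<bar> / c"
proof -
  have "c * \<bar>h - l\<bar> \<le> \<bar>G h - G l\<bar>"
  proof (cases "h \<le> l")
    case True
    then have "c * (l - h) \<le> G l - G h" using growth assms by blast
    with True show ?thesis by (simp add: abs_minus_commute abs_le_iff)
  next
    case False
    then have "c * (h - l) \<le> G h - G l" using growth assms by simp
    with False show ?thesis by (simp add: abs_le_iff)
  qed
  with \<open>0 < c\<close> show ?thesis by (simp add: field_simps)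
qed

definition logistic_mean :: "'a measure \<Rightarrow> ('a \<Rightarrow> real) \<Rightarrow> real \<Rightarrow> real" where
  "logistic_mean N c l = (\<integral>x. logistic (l + c x) \<partial>N)"

locale random_potential = prob_space +
  fixes c :: "'a \<Rightarrow> real"
  assumes measurable_potential [measurable]: "c \<in> borel_measurable M"
begin

lemma integrable_logistic: "integrable M (\<lambda>x. logistic (l + c x))"
  using logistic_bounds by (intro integrable_const_bound[where B = 1]) (auto simp: less_imp_le)

lemma strict_mono_logistic_mean: "strict_mono (logistic_mean M c)"
proof (rule strict_monoI)
  fix a b :: real
  assume "a < b"
  then show "logistic_mean M c a < logistic_mean M c b"
    unfolding logistic_mean_def using strict_mono_logistic
    by (intro integral_less_AE_space)
       (auto simp: integrable_logistic emeasure_space_1 strict_mono_less)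
qed

lemma logistic_mean_lipschitz:
  "\<bar>logistic_mean M c a - logistic_mean M c b\<bar> \<le> \<bar>a - b\<bar>"
proof -
  have "\<bar>logistic_mean M c a - logistic_mean M c b\<bar>
      = \<bar>\<integral>x. logistic (a + c x) - logistic (b + c x) \<partial>M\<bar>"
    by (simp add: logistic_mean_def integrable_logistic)
  also have "\<dots> \<le> (\<integral>x. \<bar>logistic (a + c x) - logistic (b + c x)\<bar> \<partial>M)"
    by (rule integral_abs_bound)
  also have "\<dots> \<le> \<bar>a - b\<bar>"
  proof (intro integral_le_const AE_I2)
    fix x
    show "\<bar>logistic (a + c x) - logistic (b + c x)\<bar> \<le> \<bar>a - b\<bar>"
      using logistic_lipschitz[of "a + c x" "b + c x"] by simp
  qed (simp add: integrable_logistic)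
  finally show ?thesis .
qed

lemma continuous_on_logistic_mean: "continuous_on S (logistic_mean M c)"
  by (rule lipschitz_on_continuous_on[of 1])
     (auto intro!: lipschitz_onI simp: dist_real_def logistic_mean_lipschitz)

end

locale bounded_potential = random_potential +
  fixes B :: real
  assumes bounded_potential: "\<And>x. x \<in> space M \<Longrightarrow> \<bar>c x\<bar> \<le> B"
begin

lemma potential_bound_nonneg: "0 \<le> B"
proof -
  obtain x where "x \<in> space M" using not_empty by blast
  with bounded_potential show ?thesis by force
qed

lemma logistic_mean_bounds:
  "logistic (l - B) \<le> logistic_mean M c l" "logistic_mean M c l \<le> logistic (l + B)"
  unfolding logistic_mean_def using bounded_potential
  by (auto intro!: integral_ge_const integral_le_const logistic_mono
           simp: integrable_logistic abs_le_iff minus_le_iff)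

lemma logistic_mean_growth:
  assumes "a \<le> b" "\<bar>a - L\<bar> \<le> B" "\<bar>b - L\<bar> \<le> B"
  shows "exp (- (2 * B)) * dlogistic L * (b - a) \<le> logistic_mean M c b - logistic_mean M c a"
proof -
  have "exp (- (2 * B)) * dlogistic L * (b - a)
      \<le> (\<integral>x. logistic (b + c x) - logistic (a + c x) \<partial>M)"
  proof (intro integral_ge_const AE_I2)
    fix x assume "x \<in> space M"
    with bounded_potential assms show "exp (- (2 * B)) * dlogistic L * (b - a)
        \<le> logistic (b + c x) - logistic (a + c x)"
      using logistic_diff_bounds(1)[of "a + c x" "b + c x" L "2 * B"] by (force simp: mult_ac)
  qed (simp add: integrable_logistic)
  then show ?thesis
    by (simp add: logistic_mean_def integrable_logistic)
qed

lemma logistic_mean_solution: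
  assumes "0 < m" "m < 1"
  shows "logistic_mean M c (THE l. logistic_mean M c l = m) = m"
    and "\<bar>(THE l. logistic_mean M c l = m) - logit m\<bar> \<le> B"
proof -
  have "logistic_mean M c (logit m - B) \<le> m" "m \<le> logistic_mean M c (logit m + B)"
    using logistic_mean_bounds[of "logit m - B"] logistic_mean_bounds[of "logit m + B"]
      logistic_logit[OF assms] by simp_all
  from strict_mono_the_solution[OF strict_mono_logistic_mean continuous_on_logistic_mean _ this]
  show "logistic_mean M c (THE l. logistic_mean M c l = m) = m"
    and "\<bar>(THE l. logistic_mean M c l = m) - logit m\<bar> \<le> B"
    using potential_bound_nonneg by (auto simp: abs_le_iff)
qed

lemma logistic_mean_solution_stability:
  assumes "0 < m" "m < 1" "\<bar>l - logit m\<bar> \<le> B"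
  shows "\<bar>(THE l. logistic_mean M c l = m) - l\<bar>
           \<le> exp (2 * B) / dlogistic (logit m) * \<bar>logistic_mean M c l - m\<bar>"
proof -
  note solution = logistic_mean_solution[OF assms(1,2)]
  have "\<bar>(THE l. logistic_mean M c l = m) - l\<bar>
      \<le> \<bar>logistic_mean M c (THE l. logistic_mean M c l = m) - logistic_mean M c l\<bar>
          / (exp (- (2 * B)) * dlogistic (logit m))"
    using solution(2) assms(3) logistic_mean_growth
    by (intro abs_diff_le_of_growth[where I = "{l. \<bar>l - logit m\<bar> \<le> B}"]) (auto simp: dlogistic_pos)
  then show ?thesis
    by (simp add: solution(1) abs_minus_commute exp_minus field_simps)
qed

lemma logistic_mean_deviation_bound:
  assumes "\<bar>l - L\<bar> \<le> B" "\<bar>t\<bar> \<le> B"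
  shows "\<bar>logistic (l + t) - logistic_mean M c l\<bar> \<le> 2 * B * (exp (2 * B) * dlogistic L)"
proof -
  have "logistic (l - B) \<le> logistic (l + t)" "logistic (l + t) \<le> logistic (l + B)"
    using assms(2) by (auto intro!: logistic_mono)
  moreover have "logistic (l + B) - logistic (l - B) \<le> 2 * B * (exp (2 * B) * dlogistic L)"
    using logistic_diff_bounds(2)[of "l - B" "l + B" L "2 * B"] assms(1) potential_bound_nonneg by auto
  ultimately show ?thesis
    using logistic_mean_bounds[of l] by (simp add: abs_le_iff)
qed

end

lemma bij_betw_box: "bij_betw vec_nth (box K :: (int ^ 'd) set) (UNIV \<rightarrow>\<^sub>E {0..<int K})"
proof (rule bij_betwI[of _ _ _ vec_lambda])
  show "vec_nth \<in> box K \<rightarrow> UNIV \<rightarrow>\<^sub>E {0..<int K}"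
    by (simp add: box_def Pi_iff PiE_iff)
  show "vec_lambda \<in> (UNIV \<rightarrow>\<^sub>E {0..<int K}) \<rightarrow> box K"
    by (auto simp: box_def PiE_iff)
qed (simp_all add: vec_lambda_inverse)

lemma finite_box: "finite (box K :: (int ^ 'd) set)"
  using bij_betw_finite[OF bij_betw_box] by (simp add: finite_PiE)

lemma card_box: "card (box K :: (int ^ 'd) set) = K ^ CARD('d)"
  using bij_betw_same_card[OF bij_betw_box] by (simp add: card_PiE)

lemma zero_in_box: "0 < K \<Longrightarrow> 0 \<in> box K"
  by (simp add: box_def)

lemma logistic_mean_uniform_box:
  "logistic_mean (uniform_count_measure (box K)) a l
     = (1 / real K ^ CARD('d)) * (\<Sum>x\<in>(box K :: (int ^ 'd) set). logistic (l + a x))"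
  by (simp add: logistic_mean_def integral_uniform_count_measure finite_box card_box)

lemma bounded_potential_uniform_box:
  assumes "0 < K" "\<And>x. \<bar>a x\<bar> \<le> B"
  shows "bounded_potential (uniform_count_measure (box K :: (int ^ 'd) set)) a B"
proof -
  have "prob_space (uniform_count_measure (box K :: (int ^ 'd) set))"
    using zero_in_box[OF assms(1)] by (intro prob_space_uniform_count_measure) (auto simp: finite_box)
  moreover have "a \<in> borel_measurable (uniform_count_measure (box K))"
    by (simp add: measurable_cong_sets[OF sets_uniform_count_measure_count_space refl])
  ultimately show ?thesis
    using assms(2) by (simp add: bounded_potential_def random_potential_def
        random_potential_axioms_def bounded_potential_axioms_def)
qed

definition box_average :: "nat \<Rightarrow> ((int ^ 'd \<Rightarrow> real) \<Rightarrow> real) \<Rightarrow> (int ^ 'd \<Rightarrow> real) \<Rightarrow> real" where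
  "box_average K f a = (1 / real K ^ CARD('d)) * (\<Sum>x\<in>box K. f (shift x a))"

lemma abs_box_average_le:
  fixes f :: "(int ^ 'd \<Rightarrow> real) \<Rightarrow> real"
  assumes "0 < K" "\<And>x. x \<in> box K \<Longrightarrow> \<bar>f (shift x a)\<bar> \<le> q"
  shows "\<bar>box_average K f a\<bar> \<le> q"
proof -
  have "\<bar>\<Sum>x\<in>box K. f (shift x a)\<bar> \<le> (\<Sum>x\<in>box K. \<bar>f (shift x a)\<bar>)"
    by (rule sum_abs)
  also have "\<dots> \<le> real (card (box K :: (int ^ 'd) set)) * q"
    using assms(2) by (rule sum_bounded_above)
  finally show ?thesis
    using assms(1)
    by (simp add: box_average_def abs_mult card_box field_simps)
qed

definition centered_occupation :: "real \<Rightarrow> real \<Rightarrow> (int ^ 'd \<Rightarrow> real) \<Rightarrow> real" where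
  "centered_occupation l m a = logistic (l + a 0) - m"

lemma measurable_centered_occupation [measurable]:
  "centered_occupation l m \<in> borel_measurable (PiM UNIV (\<lambda>_. borel))"
  unfolding centered_occupation_def by measurable

lemma box_average_centered_occupation:
  assumes "0 < K"
  shows "box_average K (centered_occupation l m) a
           = (1 / real K ^ CARD('d)) * (\<Sum>x\<in>(box K :: (int ^ 'd) set). logistic (l + a x)) - m"
proof -
  have "(\<Sum>x\<in>(box K :: (int ^ 'd) set). centered_occupation l m (shift x a))
      = (\<Sum>x\<in>box K. logistic (l + a x)) - real K ^ CARD('d) * m"
    by (simp add: centered_occupation_def shift_def sum_subtractf card_box)
  with assms show ?thesis
    by (simp add: box_average_def field_simps)
qed

lemma empirical_cp_stability:
  fixes \<alpha> :: "'w \<Rightarrow> int ^ 'd \<Rightarrow> real"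
  assumes "0 < K" "\<And>x. \<bar>\<alpha> \<omega> x\<bar> \<le> B" "0 < m" "m < 1" "\<bar>l - logit m\<bar> \<le> B"
  shows "\<bar>empirical_cp \<alpha> K m \<omega> - l\<bar>
           \<le> exp (2 * B) / dlogistic (logit m) * \<bar>box_average K (centered_occupation l m) (\<alpha> \<omega>)\<bar>"
proof -
  interpret bounded_potential "uniform_count_measure (box K :: (int ^ 'd) set)" "\<alpha> \<omega>" B
    using bounded_potential_uniform_box assms(1,2) .
  have "empirical_cp \<alpha> K m \<omega> = (THE l. logistic_mean (uniform_count_measure (box K)) (\<alpha> \<omega>) l = m)"
    by (simp add: empirical_cp_def logistic_mean_uniform_box eq_commute)
  then show ?thesis
    using logistic_mean_solution_stability[OF assms(3-5)]
    by (simp add: logistic_mean_uniform_box box_average_centered_occupation assms(1))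
qed

lemma annealed_cp_eq_the_solution:
  "annealed_cp M \<alpha> m = (THE l. logistic_mean M (\<lambda>\<omega>. \<alpha> \<omega> 0) l = m)"
  by (simp add: annealed_cp_def logistic_mean_def add.commute)

lemma nn_integral_powr_le_of_pointwise:
  fixes X Y :: "'a \<Rightarrow> real"
  assumes "\<And>\<omega>. \<omega> \<in> space M \<Longrightarrow> \<bar>X \<omega>\<bar> \<le> c * \<bar>Y \<omega>\<bar>" "0 \<le> c" "0 \<le> \<gamma>"
    and "integrable M (\<lambda>\<omega>. \<bar>Y \<omega>\<bar> powr \<gamma>)"
  shows "(\<integral>\<^sup>+\<omega>. ennreal (\<bar>X \<omega>\<bar> powr \<gamma>) \<partial>M) \<le> ennreal (c powr \<gamma> * (\<integral>\<omega>. \<bar>Y \<omega>\<bar> powr \<gamma> \<partial>M))"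
proof -
  have "(\<integral>\<^sup>+\<omega>. ennreal (\<bar>X \<omega>\<bar> powr \<gamma>) \<partial>M) \<le> (\<integral>\<^sup>+\<omega>. ennreal (c powr \<gamma> * \<bar>Y \<omega>\<bar> powr \<gamma>) \<partial>M)"
  proof (intro nn_integral_mono ennreal_leI)
    fix \<omega> assume "\<omega> \<in> space M"
    then have "\<bar>X \<omega>\<bar> powr \<gamma> \<le> (c * \<bar>Y \<omega>\<bar>) powr \<gamma>"
      using assms(1,3) by (intro powr_mono2) auto
    then show "\<bar>X \<omega>\<bar> powr \<gamma> \<le> c powr \<gamma> * \<bar>Y \<omega>\<bar> powr \<gamma>"
      using assms(2) by (simp add: powr_mult)
  qed
  also have "\<dots> = ennreal (c powr \<gamma> * (\<integral>\<omega>. \<bar>Y \<omega>\<bar> powr \<gamma> \<partial>M))"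
    using assms(4) by (subst nn_integral_eq_integral) auto
  finally show ?thesis .
qed

lemma (in prob_space) integral_powr_le_of_bounded:
  fixes Y :: "'a \<Rightarrow> real"
  assumes [measurable]: "Y \<in> borel_measurable M"
    and "\<And>\<omega>. \<omega> \<in> space M \<Longrightarrow> \<bar>Y \<omega>\<bar> \<le> Q" "0 \<le> \<gamma>"
  shows "integrable M (\<lambda>\<omega>. \<bar>Y \<omega>\<bar> powr \<gamma>)" "(\<integral>\<omega>. \<bar>Y \<omega>\<bar> powr \<gamma> \<partial>M) \<le> Q powr \<gamma>"
proof -
  have bound: "\<bar>Y \<omega>\<bar> powr \<gamma> \<le> Q powr \<gamma>" if "\<omega> \<in> space M" for \<omega>
    using assms(2)[OF that] assms(3) by (intro powr_mono2) auto
  show "integrable M (\<lambda>\<omega>. \<bar>Y \<omega>\<bar> powr \<gamma>)"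
    using bound by (intro integrable_const_bound[where B = "Q powr \<gamma>"]) auto
  then show "(\<integral>\<omega>. \<bar>Y \<omega>\<bar> powr \<gamma> \<partial>M) \<le> Q powr \<gamma>"
    using bound by (intro integral_le_const AE_I2) auto
qed

locale mixing_field = prob_space M for M :: "'w measure" +
  fixes \<alpha> :: "'w \<Rightarrow> int ^ 'd \<Rightarrow> real" and B \<gamma> C0 :: real
  assumes measurable_field [measurable]: "\<And>x. (\<lambda>\<omega>. \<alpha> \<omega> x) \<in> borel_measurable M"
    and bounded_field: "\<And>\<omega> x. \<omega> \<in> space M \<Longrightarrow> \<bar>\<alpha> \<omega> x\<bar> \<le> B"
    and exponent_nonneg: "0 \<le> \<gamma>"
    and mixing: "\<And>(l::nat) (K::nat) (f :: (int ^ 'd \<Rightarrow> real) \<Rightarrow> real).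
        0 < l \<Longrightarrow> 0 < K \<Longrightarrow>
        f \<in> borel_measurable (PiM UNIV (\<lambda>_. borel)) \<Longrightarrow>
        (\<And>a b. (\<forall>y\<in>box l. a y = b y) \<Longrightarrow> f a = f b) \<Longrightarrow>
        integrable M (\<lambda>\<omega>. f (\<alpha> \<omega>)) \<Longrightarrow>
        integrable M (\<lambda>\<omega>. \<bar>f (\<alpha> \<omega>)\<bar> powr \<gamma>) \<Longrightarrow>
        (\<integral>\<omega>. f (\<alpha> \<omega>) \<partial>M) = 0 \<Longrightarrow>
        (\<integral>\<omega>. \<bar>box_average K f (\<alpha> \<omega>)\<bar> powr \<gamma> \<partial>M)
          \<le> C0 * (real l / real K) powr (\<gamma> * real CARD('d) / 2)
              * (\<integral>\<omega>. \<bar>f (\<alpha> \<omega>)\<bar> powr \<gamma> \<partial>M)"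
begin

sublocale annealed: bounded_potential M "\<lambda>\<omega>. \<alpha> \<omega> 0" B
  using bounded_field by unfold_locales auto

lemma annealed_cp_solution:
  assumes "0 < m" "m < 1"
  shows "logistic_mean M (\<lambda>\<omega>. \<alpha> \<omega> 0) (annealed_cp M \<alpha> m) = m"
    and "\<bar>annealed_cp M \<alpha> m - logit m\<bar> \<le> B"
  using annealed.logistic_mean_solution[OF assms] by (simp_all add: annealed_cp_eq_the_solution)

lemma centered_occupation_bound:
  assumes "0 < m" "m < 1" "\<bar>a 0\<bar> \<le> B"
  shows "\<bar>centered_occupation (annealed_cp M \<alpha> m) m a\<bar> \<le> 2 * B * (exp (2 * B) * dlogistic (logit m))"
  using annealed.logistic_mean_deviation_bound[OF annealed_cp_solution(2)[OF assms(1,2)] assms(3)]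
    annealed_cp_solution(1)[OF assms(1,2)]
  by (simp add: centered_occupation_def)

lemma measurable_shift_field [measurable]:
  "(\<lambda>\<omega>. shift x (\<alpha> \<omega>)) \<in> measurable M (PiM UNIV (\<lambda>_. borel))"
  unfolding shift_def by (rule measurable_PiM_single') auto

lemma measurable_box_average_field [measurable]:
  assumes [measurable]: "f \<in> borel_measurable (PiM UNIV (\<lambda>_. borel))"
  shows "(\<lambda>\<omega>. box_average K f (\<alpha> \<omega>)) \<in> borel_measurable M"
  unfolding box_average_def by measurable

lemma centered_occupation_moment:
  assumes "0 < K" "0 < m" "m < 1"
  defines "f \<equiv> centered_occupation (annealed_cp M \<alpha> m) m"
    and "Q \<equiv> 2 * B * (exp (2 * B) * dlogistic (logit m))"
  shows "(\<integral>\<omega>. \<bar>box_average K f (\<alpha> \<omega>)\<bar> powr \<gamma> \<partial>M)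
           \<le> max 0 C0 * real K powr (- \<gamma> * real CARD('d) / 2) * Q powr \<gamma>"
proof -
  have local: "f a = f b" if "\<forall>y\<in>box 1. a y = b y" for a b
    using that zero_in_box[of 1] by (auto simp: f_def centered_occupation_def)
  have integrable: "integrable M (\<lambda>\<omega>. f (\<alpha> \<omega>))"
    by (simp add: f_def centered_occupation_def annealed.integrable_logistic)
  have centered: "(\<integral>\<omega>. f (\<alpha> \<omega>) \<partial>M) = 0"
    using annealed_cp_solution(1)[OF assms(2,3)]
    by (simp add: f_def centered_occupation_def annealed.integrable_logistic logistic_mean_def prob_space)
  have "\<bar>f (\<alpha> \<omega>)\<bar> \<le> Q" if "\<omega> \<in> space M" for \<omega>
    using centered_occupation_bound[of m "\<alpha> \<omega>", OF assms(2,3) bounded_field[OF that]]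
    by (simp add: f_def Q_def)
  note moment = integral_powr_le_of_bounded[OF borel_measurable_integrable[OF integrable] this exponent_nonneg]
  have "(\<integral>\<omega>. \<bar>box_average K f (\<alpha> \<omega>)\<bar> powr \<gamma> \<partial>M)
      \<le> C0 * real K powr (- \<gamma> * real CARD('d) / 2) * (\<integral>\<omega>. \<bar>f (\<alpha> \<omega>)\<bar> powr \<gamma> \<partial>M)"
    using mixing[of 1 K f, OF _ assms(1) _ local integrable moment(1) centered]
    by (simp add: f_def powr_minus_divide powr_divide)
  also have "\<dots> \<le> max 0 C0 * real K powr (- \<gamma> * real CARD('d) / 2) * Q powr \<gamma>"
    using moment(2) by (intro mult_mono) auto
  finally show ?thesis .
qed

lemma empirical_cp_moment_bound:
  assumes "0 < K" "0 < m" "m < 1"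
  shows "(\<integral>\<^sup>+\<omega>. ennreal (\<bar>empirical_cp \<alpha> K m \<omega> - annealed_cp M \<alpha> m\<bar> powr \<gamma>) \<partial>M)
           \<le> ennreal (max 0 C0 * (2 * B * exp (4 * B)) powr \<gamma> * real K powr (- \<gamma> * real CARD('d) / 2))"
proof -
  define f :: "(int ^ 'd \<Rightarrow> real) \<Rightarrow> real" where "f = centered_occupation (annealed_cp M \<alpha> m) m"
  define D where "D = dlogistic (logit m)"
  define Q where "Q = 2 * B * (exp (2 * B) * D)"
  define P where "P = real K powr (- \<gamma> * real CARD('d) / 2)"
  have D: "0 < D" by (simp add: D_def dlogistic_pos)
  have Q: "0 \<le> Q" using D annealed.potential_bound_nonneg by (simp add: Q_def)
  have "\<bar>box_average K f (\<alpha> \<omega>)\<bar> \<le> Q" if "\<omega> \<in> space M" for \<omega>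
  proof (rule abs_box_average_le[OF assms(1)])
    fix x
    show "\<bar>f (shift x (\<alpha> \<omega>))\<bar> \<le> Q"
      using centered_occupation_bound[of m "shift x (\<alpha> \<omega>)", OF assms(2,3)] bounded_field[OF that]
      by (simp add: shift_def f_def Q_def D_def)
  qed
  then have integrable: "integrable M (\<lambda>\<omega>. \<bar>box_average K f (\<alpha> \<omega>)\<bar> powr \<gamma>)"
    by (intro integral_powr_le_of_bounded(1) exponent_nonneg) (simp_all add: f_def)
  have "\<bar>empirical_cp \<alpha> K m \<omega> - annealed_cp M \<alpha> m\<bar> \<le> exp (2 * B) / D * \<bar>box_average K f (\<alpha> \<omega>)\<bar>"
    if "\<omega> \<in> space M" for \<omega>
    using empirical_cp_stability[of K \<alpha> \<omega>, OF assms(1) bounded_field[OF that] assms(2,3)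
        annealed_cp_solution(2)[OF assms(2,3)]]
    by (simp add: f_def D_def)
  then have "(\<integral>\<^sup>+\<omega>. ennreal (\<bar>empirical_cp \<alpha> K m \<omega> - annealed_cp M \<alpha> m\<bar> powr \<gamma>) \<partial>M)
      \<le> ennreal ((exp (2 * B) / D) powr \<gamma> * (\<integral>\<omega>. \<bar>box_average K f (\<alpha> \<omega>)\<bar> powr \<gamma> \<partial>M))"
    using D exponent_nonneg integrable by (intro nn_integral_powr_le_of_pointwise) simp_all
  also have "\<dots> \<le> ennreal ((exp (2 * B) / D) powr \<gamma> * (max 0 C0 * P * Q powr \<gamma>))"
    using centered_occupation_moment[OF assms] by (intro ennreal_leI mult_left_mono) (simp_all add: f_def P_def Q_def D_def)
  also have "(exp (2 * B) / D) powr \<gamma> * (max 0 C0 * P * Q powr \<gamma>)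
      = max 0 C0 * (exp (2 * B) / D * Q) powr \<gamma> * P"
    using D Q by (simp add: powr_mult[of "exp (2 * B) / D" Q] del: times_divide_eq_left)
  also have "exp (2 * B) / D * Q = 2 * B * exp (4 * B)"
    using D by (simp add: Q_def field_simps mult_exp_exp)
  finally show ?thesis
    by (simp add: P_def)
qed

end

theorem lemma10p3:
  fixes M :: "'w measure"
    and \<alpha> :: "'w \<Rightarrow> int ^ 'd \<Rightarrow> real"
    and B \<gamma> C0 :: real
  assumes prob: "prob_space M"
    and meas: "\<And>x. (\<lambda>\<omega>. \<alpha> \<omega> x) \<in> borel_measurable M"
    and bounded: "\<And>\<omega> x. \<omega> \<in> space M \<Longrightarrow> \<bar>\<alpha> \<omega> x\<bar> \<le> B"
    and stationary: "\<And>x. distr M (PiM UNIV (\<lambda>_. borel)) (\<lambda>\<omega>. shift x (\<alpha> \<omega>))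
                         = distr M (PiM UNIV (\<lambda>_. borel)) \<alpha>"
    and gamma: "\<gamma> \<ge> max 4 (2 * (real CARD('d) + 2) / real CARD('d) ^ 2)"
    and mixing: "\<And>(l::nat) (K::nat) (f :: (int ^ 'd \<Rightarrow> real) \<Rightarrow> real).
        0 < l \<Longrightarrow> 0 < K \<Longrightarrow>
        f \<in> borel_measurable (PiM UNIV (\<lambda>_. borel)) \<Longrightarrow>
        (\<And>a b. (\<forall>y\<in>box l. a y = b y) \<Longrightarrow> f a = f b) \<Longrightarrow>
        integrable M (\<lambda>\<omega>. f (\<alpha> \<omega>)) \<Longrightarrow>
        integrable M (\<lambda>\<omega>. \<bar>f (\<alpha> \<omega>)\<bar> powr \<gamma>) \<Longrightarrow>
        (\<integral>\<omega>. f (\<alpha> \<omega>) \<partial>M) = 0 \<Longrightarrow>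
        (\<integral>\<omega>. \<bar>(1 / real K ^ CARD('d)) * (\<Sum>x\<in>box K. f (shift x (\<alpha> \<omega>)))\<bar> powr \<gamma> \<partial>M)
          \<le> C0 * (real l / real K) powr (\<gamma> * real CARD('d) / 2)
              * (\<integral>\<omega>. \<bar>f (\<alpha> \<omega>)\<bar> powr \<gamma> \<partial>M)"
  shows "\<exists>C::real. \<forall>(K::nat) (m::real). 0 < K \<longrightarrow> 0 < m \<longrightarrow> m < 1 \<longrightarrow>
           (\<integral>\<^sup>+\<omega>. ennreal (\<bar>empirical_cp \<alpha> K m \<omega> - annealed_cp M \<alpha> m\<bar> powr \<gamma>) \<partial>M)
             \<le> ennreal (C * real K powr (- \<gamma> * real CARD('d) / 2))"
proof -
  interpret mixing_field M \<alpha> B \<gamma> C0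
    using prob meas bounded gamma mixing
    by (simp add: mixing_field_def mixing_field_axioms_def box_average_def)
  show ?thesis
    using empirical_cp_moment_bound by blast
qed

end
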